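(* For $n\ge2$ let $c=c(n)>0$ be the unique value with $\Pr_{\mathbf{g}\sim N(0,1)}[|\mathbf{g}|\le c]=(1/2)^{1/n}$, and let $K=[-c,c]^n\subseteq\mathbb{R}^n$ (so $\mathrm{vol}(K)=1/2$), viewed as $K:\mathbb{R}^n\to\{-1,1\}$. Then $\mathsf{W}^{\le2}[K]=O\big(\tfrac{\log^2 n}{n}\big)$.
   Context: $\mathrm{vol}(K)=\Pr_{\mathbf{g}\sim N(0,I_n)}[\mathbf{g}\in K]$. $K(x)=1$ if $x\in K$ and $-1$ otherwise. For $S\in\mathbb{N}^n$, $H_S(x)=\prod_i h_{S_i}(x_i)$ with $h_j$ the normalized univariate Hermite polynomials; $\tilde f(S)=\mathbf{E}_{\mathbf{g}\sim N(0,I_n)}[f(\mathbf{g})H_S(\mathbf{g})]$, $|S|=\sum_iS_i$, and $\mathsf{W}^{\le2}[f]=\sum_{|S|\le2}\tilde f(S)^2$. The $O(\cdot)$ hides an absolute constant. *)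

theory Defs
  imports "HOL-Probability.Probability"
begin

definition gauss1 :: "real measure" where
  "gauss1 = density lborel std_normal_density"

text \<open>Standard Gaussian measure N(0,I_n) on R^n, with R^n represented as
  (extensional) functions on the index set {..<n}.\<close>
definition gaussn :: "nat \<Rightarrow> (nat \<Rightarrow> real) measure" where
  "gaussn n = PiM {..<n} (\<lambda>_. gauss1)"

fun hermite :: "nat \<Rightarrow> real \<Rightarrow> real" where
  "hermite 0 x = 1"
| "hermite (Suc 0) x = x"
| "hermite (Suc (Suc k)) x = x * hermite (Suc k) x - real (Suc k) * hermite k x"

definition hnorm :: "nat \<Rightarrow> real \<Rightarrow> real" where
  "hnorm k x = hermite k x / sqrt (fact k)"

definition hermite_multi :: "nat \<Rightarrow> (nat \<Rightarrow> nat) \<Rightarrow> (nat \<Rightarrow> real) \<Rightarrow> real" where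
  "hermite_multi n S x = (\<Prod>i<n. hnorm (S i) (x i))"

definition hermite_coeff :: "nat \<Rightarrow> ((nat \<Rightarrow> real) \<Rightarrow> real) \<Rightarrow> (nat \<Rightarrow> nat) \<Rightarrow> real" where
  "hermite_coeff n f S = (\<integral>x. f x * hermite_multi n S x \<partial>gaussn n)"

definition multi_indices_le :: "nat \<Rightarrow> nat \<Rightarrow> (nat \<Rightarrow> nat) set" where
  "multi_indices_le n d = {S. (\<forall>i\<ge>n. S i = 0) \<and> (\<Sum>i<n. S i) \<le> d}"

definition W_le2 :: "nat \<Rightarrow> ((nat \<Rightarrow> real) \<Rightarrow> real) \<Rightarrow> real" where
  "W_le2 n f = (\<Sum>S\<in>multi_indices_le n 2. (hermite_coeff n f S)\<^sup>2)"

definition cube_ind :: "nat \<Rightarrow> real \<Rightarrow> (nat \<Rightarrow> real) \<Rightarrow> real" where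
  "cube_ind n c x = (if \<forall>i<n. \<bar>x i\<bar> \<le> c then 1 else -1)"

end

theory Submission
  imports Defs
begin

text \<open>The cube indicator is \<open>2 \<Prod>\<^sub>i [\<bar>x\<^sub>i\<bar> \<le> c] - 1\<close>, so its Hermite coefficients
  factor into one-dimensional ones. With \<open>p = \<gamma>[-c,c]\<close>, the interval indicator has
  coefficients \<open>p\<close>, \<open>0\<close> and \<open>-\<surd>2 c \<phi>(c)\<close> in degrees 0, 1, 2, while the constant 1 has none
  in degrees 1 and 2. Hence among the multi-indices of degree at most 2 only \<open>S = 0\<close>, which
  contributes \<open>(2p^n - 1)\<^sup>2 = 0\<close>, and the \<open>n\<close> indices \<open>S = 2e\<^sub>i\<close> survive, giving
  \<open>W\<^sup>\<le>\<^sup>2 \<le> 8n (c \<phi>(c))\<^sup>2\<close>. Since \<open>p = 2 powr (-1/n)\<close>, the Gaussian tail \<open>1 - p\<close> is at most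
  \<open>1/n\<close>; the tail lower bound \<open>\<phi>(c) / (9(c+1))\<close> then forces \<open>\<phi>(c) = O((c+1)/n)\<close>, and
  hence \<open>c \<phi>(c) = O(log n / n)\<close>.\<close>

abbreviation phi :: "real \<Rightarrow> real" where "phi \<equiv> std_normal_density"

lemma prob_space_gauss1: "prob_space gauss1"
  unfolding gauss1_def by (rule prob_space_normal_density) simp

lemma space_gauss1 [simp]: "space gauss1 = UNIV"
  and sets_gauss1 [simp]: "sets gauss1 = sets borel"
  unfolding gauss1_def by auto

lemma integral_gauss1:
  "g \<in> borel_measurable borel \<Longrightarrow> integral\<^sup>L gauss1 g = (\<integral>x. phi x * g x \<partial>lborel)"
  unfolding gauss1_def by (subst integral_density) (auto simp: normal_density_nonneg)

lemma integrable_gauss1_iff: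
  "g \<in> borel_measurable borel \<Longrightarrow> integrable gauss1 g \<longleftrightarrow> integrable lborel (\<lambda>x. phi x * g x)"
  unfolding gauss1_def by (subst integrable_density) (auto simp: normal_density_nonneg)

lemma borel_measurable_hermite [measurable]: "hermite k \<in> borel_measurable borel"
  by (induction k rule: induct_nat_012) auto

lemma integrable_gauss1_power_hermite: "integrable gauss1 (\<lambda>x. x ^ j * hermite k x)"
proof (induction k arbitrary: j rule: induct_nat_012)
  case 0
  show ?case using integrable_std_normal_moment[of j] by (subst integrable_gauss1_iff) auto
next
  case 1
  show ?case
    using integrable_std_normal_moment[of "Suc j"]
    by (subst integrable_gauss1_iff) (auto simp: mult.commute)
next
  case (ge2 k)
  have "integrable gauss1 (\<lambda>x. x ^ Suc j * hermite (Suc k) x - real (Suc k) * (x ^ j * hermite k x))"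
    using ge2 by (intro Bochner_Integration.integrable_diff integrable_mult_right) (simp_all del: power_Suc)
  then show ?case by (simp add: algebra_simps)
qed

lemma integrable_gauss1_hnorm: "integrable gauss1 (hnorm k)"
  using integrable_gauss1_power_hermite[of 0 k] by (simp add: hnorm_def[abs_def])

definition hermite_coeff1 :: "(real \<Rightarrow> real) \<Rightarrow> nat \<Rightarrow> real" where
  "hermite_coeff1 f k = (\<integral>x. f x * hnorm k x \<partial>gauss1)"

lemma hnorm_0: "hnorm 0 x = 1"
  and hnorm_1: "hnorm 1 x = x"
  and hnorm_2: "hnorm 2 x = (x\<^sup>2 - 1) / sqrt 2"
  by (simp_all add: hnorm_def numeral_2_eq_2 power2_eq_square)

lemma hermite_coeff1_one_0: "hermite_coeff1 (\<lambda>_. 1) 0 = 1"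
  using prob_space.prob_space[OF prob_space_gauss1]
  by (simp add: hermite_coeff1_def hnorm_0 measure_def)

lemma hermite_coeff1_one_1: "hermite_coeff1 (\<lambda>_. 1) 1 = 0"
  using integral_std_normal_moment_odd[of 0]
  unfolding hermite_coeff1_def hnorm_1 by (subst integral_gauss1) auto

lemma hermite_coeff1_one_2: "hermite_coeff1 (\<lambda>_. 1) 2 = 0"
proof -
  have "hermite_coeff1 (\<lambda>_. 1) 2
      = ((\<integral>x. phi x * x ^ (2 * 1) \<partial>lborel) - (\<integral>x. phi x * x ^ (2 * 0) \<partial>lborel)) / sqrt 2"
    using integrable_std_normal_moment[of 2] integrable_std_normal_moment[of 0]
    unfolding hermite_coeff1_def hnorm_2
    by (subst integral_gauss1) (auto simp: right_diff_distrib diff_divide_distrib)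
  then show ?thesis by (simp only: integral_std_normal_moment_even) simp
qed

lemma std_normal_density_minus [simp]: "phi (- x) = phi x"
  by (simp add: std_normal_density_def)

lemma has_real_derivative_std_normal_density: "(phi has_real_derivative - x * phi x) (at x)"
  unfolding std_normal_density_def
  by (auto intro!: derivative_eq_intros simp: field_simps power2_eq_square)

lemma has_real_derivative_minus_x_std_normal_density:
  "((\<lambda>x. - x * phi x) has_real_derivative (x\<^sup>2 - 1) * phi x) (at x)"
  by (auto intro!: derivative_eq_intros has_real_derivative_std_normal_density
           simp: field_simps power2_eq_square)

lemma hermite_coeff1_interval_0: "hermite_coeff1 (indicator {-c..c}) 0 = measure gauss1 {-c..c}"
  by (simp add: hermite_coeff1_def hnorm_0)

lemma hermite_coeff1_interval_1:
  assumes "0 \<le> c" shows "hermite_coeff1 (indicator {-c..c}) 1 = 0"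
proof -
  have "hermite_coeff1 (indicator {-c..c}) 1 = (\<integral>x. x * phi x * indicator {-c..c} x \<partial>lborel)"
    unfolding hermite_coeff1_def hnorm_1 by (subst integral_gauss1) (auto simp: mult_ac)
  also have "\<dots> = - phi c - - phi (- c)"
    using assms DERIV_minus[OF has_real_derivative_std_normal_density]
    by (intro integral_FTC_Icc_real) (auto intro!: continuous_intros simp: std_normal_density_def)
  finally show ?thesis by simp
qed

lemma hermite_coeff1_interval_2:
  assumes "0 \<le> c" shows "hermite_coeff1 (indicator {-c..c}) 2 = - sqrt 2 * c * phi c"
proof -
  have "hermite_coeff1 (indicator {-c..c}) 2
      = (\<integral>x. (x\<^sup>2 - 1) * phi x / sqrt 2 * indicator {-c..c} x \<partial>lborel)"
    unfolding hermite_coeff1_def hnorm_2 by (subst integral_gauss1) (auto simp: mult_ac)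
  also have "\<dots> = - c * phi c / sqrt 2 - - (- c) * phi (- c) / sqrt 2"
    using assms
    by (intro integral_FTC_Icc_real DERIV_cdivide has_real_derivative_minus_x_std_normal_density)
       (auto intro!: continuous_intros simp: std_normal_density_def)
  also have "\<dots> = - sqrt 2 * c * phi c"
    by (simp add: field_simps)
  finally show ?thesis .
qed

interpretation gauss_product: product_prob_space "\<lambda>_::nat. gauss1" I for I
  by (simp add: product_prob_space_def product_prob_space_axioms_def product_sigma_finite_def
      prob_space_gauss1 prob_space_imp_sigma_finite)

lemma
  assumes "\<And>k. integrable gauss1 (\<lambda>x. f x * hnorm k x)"
  shows integrable_tensor_hermite_multi:
      "integrable (gaussn n) (\<lambda>x. (\<Prod>i<n. f (x i)) * hermite_multi n S x)"
    and hermite_coeff_tensor: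
      "hermite_coeff n (\<lambda>x. \<Prod>i<n. f (x i)) S = (\<Prod>i<n. hermite_coeff1 f (S i))"
proof -
  have eq: "(\<lambda>x. (\<Prod>i<n. f (x i)) * hermite_multi n S x)
      = (\<lambda>x. \<Prod>i<n. (\<lambda>i y. f y * hnorm (S i) y) i (x i))"
    by (simp add: hermite_multi_def prod.distrib)
  show "integrable (gaussn n) (\<lambda>x. (\<Prod>i<n. f (x i)) * hermite_multi n S x)"
    unfolding eq gaussn_def by (rule gauss_product.product_integrable_prod) (auto intro: assms)
  show "hermite_coeff n (\<lambda>x. \<Prod>i<n. f (x i)) S = (\<Prod>i<n. hermite_coeff1 f (S i))"
    unfolding hermite_coeff_def eq gaussn_def hermite_coeff1_def
    by (rule gauss_product.product_integral_prod) (auto intro: assms)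
qed

lemma integrable_indicator_hnorm: "integrable gauss1 (\<lambda>x. indicator {-c..c} x * hnorm k x)"
  using integrable_mult_indicator[of "{-c..c}" gauss1 "hnorm k"] integrable_gauss1_hnorm
  by simp

lemma hermite_coeff_cube_ind:
  "hermite_coeff n (cube_ind n c) S
     = 2 * (\<Prod>i<n. hermite_coeff1 (indicator {-c..c}) (S i))
       - (\<Prod>i<n. hermite_coeff1 (\<lambda>_. 1) (S i))"
proof -
  have "cube_ind n c = (\<lambda>x. 2 * (\<Prod>i<n. indicator {-c..c} (x i)) - (\<Prod>i<n. 1))"
    by (force simp: cube_ind_def fun_eq_iff indicator_def abs_le_iff intro!: prod.neutral)
  then have "hermite_coeff n (cube_ind n c) S
      = 2 * hermite_coeff n (\<lambda>x. \<Prod>i<n. indicator {-c..c} (x i)) S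
        - hermite_coeff n (\<lambda>x. \<Prod>i<n. 1) S"
    using integrable_tensor_hermite_multi[OF integrable_indicator_hnorm[of c], of n S]
      integrable_tensor_hermite_multi[of "\<lambda>_. 1" n S] integrable_gauss1_hnorm
    by (simp add: hermite_coeff_def left_diff_distrib mult.assoc)
  then show ?thesis
    using hermite_coeff_tensor[OF integrable_indicator_hnorm] hermite_coeff_tensor[of "\<lambda>_. 1"]
      integrable_gauss1_hnorm by simp
qed

lemma multi_indices_le_bound: "S \<in> multi_indices_le n d \<Longrightarrow> S i \<le> d"
  by (cases "i < n") (auto simp: multi_indices_le_def intro: order.trans[OF member_le_sum])

lemma finite_multi_indices_le: "finite (multi_indices_le n d)"
proof (rule finite_subset)
  show "multi_indices_le n d
      \<subseteq> {S. \<forall>i. (i \<in> {..<n} \<longrightarrow> S i \<in> {..d}) \<and> (i \<notin> {..<n} \<longrightarrow> S i = 0)}"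
    using multi_indices_le_bound by (auto simp: multi_indices_le_def)
  show "finite \<dots>"
    by (intro finite_set_of_finite_funs) auto
qed

lemma multi_indices_le_2_cases:
  assumes "S \<in> multi_indices_le n 2"
  obtains "S = (\<lambda>_. 0)"
    | i where "i < n" "S i = 1"
    | i where "i < n" "S = (\<lambda>j. if j = i then 2 else 0)"
proof (cases "S = (\<lambda>_. 0)")
  case False
  then obtain i where i: "S i \<noteq> 0" by auto
  with assms have "i < n" by (auto simp: multi_indices_le_def not_less[symmetric])
  consider "S i = 1" | "S i = 2"
    using i multi_indices_le_bound[OF assms, of i] by linarith
  then show thesis
  proof cases
    case 2
    have "S j = 0" if "j \<noteq> i" for j
    proof (cases "j < n")
      case True
      have "S i + S j = (\<Sum>k\<in>{i, j}. S k)" using \<open>j \<noteq> i\<close> by simp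
      also have "\<dots> \<le> (\<Sum>k<n. S k)" using True \<open>i < n\<close> by (intro sum_mono2) auto
      also have "\<dots> \<le> 2" using assms by (simp add: multi_indices_le_def)
      finally show ?thesis using 2 by simp
    qed (use assms in \<open>simp add: multi_indices_le_def\<close>)
    then have "S = (\<lambda>j. if j = i then 2 else 0)" using 2 by auto
    then show thesis using \<open>i < n\<close> that(3) by blast
  qed (use \<open>i < n\<close> that(2) in blast)
qed (use that(1) in blast)

lemma prod_lessThan_single:
  assumes "i < n"
  shows "(\<Prod>j<n. f (if j = i then a else b)) = f a * f b ^ (n - 1)"
proof -
  have "(\<Prod>j<n. f (if j = i then a else b))
      = f a * (\<Prod>j\<in>{..<n} - {i}. f (if j = i then a else b))"
    using assms by (subst prod.remove[of _ i]) auto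
  also have "(\<Prod>j\<in>{..<n} - {i}. f (if j = i then a else b)) = f b ^ (n - 1)"
    using assms by (simp add: prod.cong[of _ _ _ "\<lambda>_. f b"])
  finally show ?thesis .
qed

lemma W_le2_cube_ind:
  assumes "0 \<le> c"
  defines "p \<equiv> measure gauss1 {-c..c}"
  shows "W_le2 n (cube_ind n c) = (2 * p ^ n - 1)\<^sup>2 + 8 * real n * (c * phi c * p ^ (n - 1))\<^sup>2"
proof -
  define g where "g S = (hermite_coeff n (cube_ind n c) S)\<^sup>2" for S
  define e where "e i = (\<lambda>j. if j = i then 2 else 0 :: nat)" for i :: nat
  define M where "M = multi_indices_le n 2"
  note coeffs = hermite_coeff_cube_ind hermite_coeff1_interval_0 hermite_coeff1_interval_1[OF assms(1)]
    hermite_coeff1_interval_2[OF assms(1)] hermite_coeff1_one_0 hermite_coeff1_one_1 hermite_coeff1_one_2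
  have e_in_M: "e i \<in> M" if "i < n" for i
    using that by (simp add: M_def multi_indices_le_def e_def sum.delta)
  have g_0: "g (\<lambda>_. 0) = (2 * p ^ n - 1)\<^sup>2"
    by (simp add: g_def coeffs p_def)
  have g_e: "g (e i) = 8 * (c * phi c * p ^ (n - 1))\<^sup>2" if "i < n" for i
    using that by (simp add: g_def e_def coeffs prod_lessThan_single p_def power_mult_distrib)
  have g_vanishes: "g S = 0" if "S \<in> M - insert (\<lambda>_. 0) (e ` {..<n})" for S
  proof -
    from that have S: "S \<in> multi_indices_le n 2" "S \<noteq> (\<lambda>_. 0)" "S \<notin> e ` {..<n}"
      by (auto simp: M_def)
    obtain i where "i < n" "S i = 1"
      by (rule multi_indices_le_2_cases[OF S(1)]) (use S in \<open>auto simp: e_def\<close>)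
    then have interval_prod: "(\<Prod>j<n. hermite_coeff1 (indicator {-c..c}) (S j)) = 0"
      and one_prod: "(\<Prod>j<n. hermite_coeff1 (\<lambda>_. 1) (S j)) = 0"
      using coeffs by (auto intro!: prod_zero bexI[of _ i])
    show ?thesis
      unfolding g_def hermite_coeff_cube_ind interval_prod one_prod by simp
  qed
  have "W_le2 n (cube_ind n c) = sum g M"
    by (simp add: W_le2_def g_def M_def)
  also have "\<dots> = sum g (insert (\<lambda>_. 0) (e ` {..<n}))"
    using finite_multi_indices_le e_in_M g_vanishes
    by (intro sum.mono_neutral_right) (auto simp: M_def multi_indices_le_def)
  also have "\<dots> = g (\<lambda>_. 0) + sum (g \<circ> e) {..<n}"
  proof -
    have "inj e"
      by (force simp: e_def inj_def fun_eq_iff)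
    moreover have "(\<lambda>_. 0) \<notin> range e"
      unfolding e_def by (smt (verit) rangeE zero_neq_numeral)
    ultimately
    show ?thesis
      by (subst sum.insert) (auto simp: sum.reindex inj_on_subset)
  qed
  also have "\<dots> = (2 * p ^ n - 1)\<^sup>2 + 8 * real n * (c * phi c * p ^ (n - 1))\<^sup>2"
    by (simp add: g_0 g_e)
  finally show ?thesis .
qed

lemma W_le2_cube_ind_le:
  assumes "0 \<le> c" and "(measure gauss1 {-c..c}) ^ n = 1/2"
  shows "W_le2 n (cube_ind n c) \<le> 8 * real n * (c * phi c)\<^sup>2"
proof -
  define p where "p = measure gauss1 {-c..c}"
  have "0 \<le> p" "p \<le> 1"
    by (simp_all add: p_def prob_space.prob_le_1[OF prob_space_gauss1])
  moreover have "0 \<le> c * phi c"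
    using assms(1) normal_density_nonneg[of 0 1 c] by simp
  ultimately have "c * phi c * p ^ (n - 1) \<le> c * phi c" "0 \<le> c * phi c * p ^ (n - 1)"
    by (simp_all add: mult_left_le power_le_one)
  then have "(c * phi c * p ^ (n - 1))\<^sup>2 \<le> (c * phi c)\<^sup>2"
    by (rule power_mono)
  then show ?thesis
    using W_le2_cube_ind[OF assms(1), of n] assms(2) by (simp add: p_def mult_left_mono)
qed

lemma std_normal_density_antimono:
  assumes "0 \<le> x" "x \<le> y" shows "phi y \<le> phi x"
  using assms by (simp add: std_normal_density_def divide_right_mono power_mono)

lemma measure_gauss1_interval_lower:
  assumes "0 \<le> a" "a \<le> b" shows "(b - a) * phi b \<le> measure gauss1 {a<..b}"
proof -
  have "(b - a) * phi b = (\<integral>x. phi b * indicator {a<..b} x \<partial>lborel)"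
    using assms by simp
  also have "\<dots> \<le> (\<integral>x. phi x * indicator {a<..b} x \<partial>lborel)"
    using assms integrable_mult_indicator[of "{a<..b}" lborel phi] integrable_std_normal_moment[of 0]
    by (intro integral_mono)
       (auto simp: mult.commute split: split_indicator intro!: std_normal_density_antimono)
  also have "\<dots> = measure gauss1 {a<..b}"
    by (subst integral_gauss1[of "indicator {a<..b}", symmetric]) auto
  finally show ?thesis .
qed

lemma std_normal_density_shift_lower:
  assumes "0 \<le> c" "0 \<le> d" "d \<le> 1" "c * d \<le> 1"
  shows "phi c / 9 \<le> phi (c + d)"
proof -
  have "phi (c + d) = phi c * exp (- (c * d + d\<^sup>2 / 2))"
    by (simp add: std_normal_density_def power2_eq_square field_simps flip: exp_add)
  moreover have "1 / 9 \<le> exp (- (c * d + d\<^sup>2 / 2))"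
  proof -
    have "d\<^sup>2 \<le> 1" using assms by (simp add: power_le_one)
    then have "exp (c * d + d\<^sup>2 / 2) \<le> exp 2" using assms by simp
    also have "exp (2 :: real) \<le> 3 * 3"
      using mult_mono[OF exp_le exp_le] by (simp flip: exp_add)
    finally show ?thesis by (simp add: exp_minus field_simps)
  qed
  moreover have "0 \<le> phi c" by (rule normal_density_nonneg)
  ultimately show ?thesis
    using mult_left_mono[of "1/9" _ "phi c"] by simp
qed

lemma std_normal_tail_lower:
  assumes "0 \<le> c" shows "phi c / (9 * (c + 1)) \<le> 1 - measure gauss1 {-c..c}"
proof -
  define d where "d = 1 / (c + 1)"
  have d: "0 < d" "d \<le> 1" "c * d \<le> 1"
    using assms by (auto simp: d_def field_simps)
  have "phi c / (9 * (c + 1)) = d * (phi c / 9)"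
    by (simp add: d_def)
  also have "\<dots> \<le> d * phi (c + d)"
    using d assms by (intro mult_left_mono std_normal_density_shift_lower) auto
  also have "\<dots> \<le> measure gauss1 {c<..c + d}"
    using measure_gauss1_interval_lower[of c "c + d"] d assms by simp
  also have "\<dots> \<le> measure gauss1 (space gauss1 - {-c..c})"
    using d prob_space.finite_measure[OF prob_space_gauss1]
    by (intro finite_measure.finite_measure_mono) auto
  also have "\<dots> = 1 - measure gauss1 {-c..c}"
    by (intro prob_space.prob_compl[OF prob_space_gauss1]) auto
  finally show ?thesis .
qed

lemma one_minus_half_powr_le: "0 \<le> t \<Longrightarrow> 1 - (1/2) powr t \<le> (t :: real)"
proof -
  assume "0 \<le> t"
  have "1 - t * ln 2 \<le> (1/2) powr t"
    using exp_ge_add_one_self[of "t * ln (1/2)"] by (simp add: powr_def ln_div)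
  moreover have "t * ln 2 \<le> t"
    using \<open>0 \<le> t\<close> ln_2_less_1 by (simp add: mult_left_le)
  ultimately show ?thesis by linarith
qed

lemma x_std_normal_density_le_ln:
  fixes t :: real
  assumes t: "2 \<le> t" and c: "0 \<le> c" and phi_le: "phi c \<le> 9 * (c + 1) / t"
  shows "c * phi c \<le> 90 * ln t / t"
proof -
  have "ln 2 \<le> ln t" using t by simp
  then have L: "2/3 \<le> ln t" using ln2_ge_two_thirds by linarith
  show ?thesis
  proof (cases "c\<^sup>2 \<le> 4 * ln t")
    case True
    have "c \<le> c\<^sup>2 + 1"
      using zero_le_power2[of "c - 1"] c unfolding power2_diff by simp
    then have "9 * c\<^sup>2 + 9 * c \<le> 90 * ln t" using True L by linarith
    have "c * phi c \<le> c * (9 * (c + 1) / t)"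
      using phi_le c by (intro mult_left_mono)
    also have "\<dots> = (9 * c\<^sup>2 + 9 * c) / t"
      by (simp add: power2_eq_square field_simps)
    also have "\<dots> \<le> 90 * ln t / t"
      using \<open>9 * c\<^sup>2 + 9 * c \<le> 90 * ln t\<close> t by (intro divide_right_mono) auto
    finally show ?thesis .
  next
    case False
    text \<open>Split \<open>exp (-c\<^sup>2/2)\<close> into two halves: one absorbs the factor \<open>c\<close>,
      the other is below \<open>1/t\<close>.\<close>
    have half1: "c * exp (- (c\<^sup>2 / 4)) \<le> 1"
    proof -
      have "c \<le> 1 + c\<^sup>2 / 4"
        using zero_le_power2[of "c/2 - 1"] unfolding power2_diff by (simp add: power_divide)
      also have "\<dots> \<le> exp (c\<^sup>2 / 4)" by (rule exp_ge_add_one_self)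
      finally show ?thesis by (simp add: exp_minus field_simps)
    qed
    have half2: "exp (- (c\<^sup>2 / 4)) \<le> 1 / t"
    proof -
      have "exp (- (c\<^sup>2 / 4)) \<le> exp (- ln t)" using False by simp
      also have "\<dots> = 1 / t" using t by (simp add: exp_minus inverse_eq_divide)
      finally show ?thesis .
    qed
    have "1 / sqrt (2 * pi) \<le> (1 :: real)"
      using pi_gt3 by (simp add: divide_simps real_le_rsqrt)
    have "c * phi c = c * exp (- (c\<^sup>2 / 4)) * exp (- (c\<^sup>2 / 4)) * (1 / sqrt (2 * pi))"
      by (simp add: std_normal_density_def flip: exp_add)
    also have "\<dots> \<le> 1 * (1 / t) * 1"
      using half1 half2 \<open>1 / sqrt (2 * pi) \<le> 1\<close> c t by (intro mult_mono) auto
    also have "\<dots> \<le> 90 * ln t / t"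
      using L t by (simp add: divide_right_mono)
    finally show ?thesis .
  qed
qed

theorem fact5p9:
  shows "\<exists>C::real. \<forall>n::nat. \<forall>c::real. n \<ge> 2 \<longrightarrow> c > 0 \<longrightarrow>
           measure gauss1 {x. \<bar>x\<bar> \<le> c} = (1/2) powr (1 / real n) \<longrightarrow>
           W_le2 n (cube_ind n c) \<le> C * (ln (real n))\<^sup>2 / real n"
proof (intro exI allI impI)
  fix n :: nat and c :: real
  assume n: "n \<ge> 2" and c: "c > 0"
    and vol: "measure gauss1 {x. \<bar>x\<bar> \<le> c} = (1/2) powr (1 / real n)"
  have "{x. \<bar>x\<bar> \<le> c} = {-c..c}" by auto
  with vol have p: "measure gauss1 {-c..c} = (1/2) powr (1 / real n)" by simp
  then have "(measure gauss1 {-c..c}) ^ n = 1/2"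
    using n by (simp add: powr_realpow[symmetric] powr_powr)
  then have "W_le2 n (cube_ind n c) \<le> 8 * real n * (c * phi c)\<^sup>2"
    using c by (intro W_le2_cube_ind_le) auto
  also have "c * phi c \<le> 90 * ln (real n) / real n"
  proof (rule x_std_normal_density_le_ln)
    have "phi c / (9 * (c + 1)) \<le> 1 / real n"
      using std_normal_tail_lower[of c] one_minus_half_powr_le[of "1 / real n"] c p by simp
    then show "phi c \<le> 9 * (c + 1) / real n"
      using c by (simp add: field_simps)
  qed (use n c in auto)
  then have "8 * real n * (c * phi c)\<^sup>2 \<le> 8 * real n * (90 * ln (real n) / real n)\<^sup>2"
    using c normal_density_nonneg[of 0 1 c] by (intro mult_left_mono power_mono) auto
  also have "\<dots> = 64800 * (ln (real n))\<^sup>2 / real n"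
    using n by (simp add: power2_eq_square field_simps)
  finally show "W_le2 n (cube_ind n c) \<le> 64800 * (ln (real n))\<^sup>2 / real n" .
qed

end
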